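(* Let $K$ be a field and let $f\colon\mathbb Z^k\to K$ be a hypergeometric term on $\mathbb Z^k$ that is a zero divisor. Then for each $\vec v\in\mathbb Z^k$ there exist nonzero polynomials $A_{\vec v},B_{\vec v}\in K[z_1,\dots,z_k]$ such that $A_{\vec v}f=B_{\vec v}f^{\vec v}$ (pointwise on $\mathbb Z^k$), and the rational functions $R_{\vec v}=A_{\vec v}/B_{\vec v}$ satisfy $R_{\vec v}R_{\vec w}^{\vec v}=R_{\vec w}R_{\vec v}^{\vec w}$ for all $\vec v,\vec w\in\mathbb Z^k$.
   Context: For a function or rational function $g$ on $\mathbb Z^k$ and $\vec v\in\mathbb Z^k$, $g^{\vec v}(\vec z)=g(\vec z+\vec v)$. A hypergeometric term on $\mathbb Z^k$ over $K$ is a function $f\colon\mathbb Z^k\to K$ such that for each $i\in\{1,\dots,k\}$ there are nonzero polynomials $A_i,B_i\in K[\vec z]$ with $A_i(\vec z)f(\vec z)=B_i(\vec z)f(\vec z+\vec e_i)$ for all $\vec z\in\mathbb Z^k$. $f$ is a zero divisor if there is a nonzero polynomial $p$ with $p(\vec z)f(\vec z)=0$ for all $\vec z$. *)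

theory Defs
  imports Main "HOL-Library.Poly_Mapping"
begin

(* Multivariate polynomials over K in variables z_i, i :: 'n (a finite index type,
  k = CARD('n)), represented as finitely supported maps from exponent vectors
  ('n \<Rightarrow>\<^sub>0 nat) to coefficients. *)

type_synonym ('n, 'a) mpoly = "('n \<Rightarrow>\<^sub>0 nat) \<Rightarrow>\<^sub>0 'a"

definition mono_eval :: "('n::finite \<Rightarrow>\<^sub>0 nat) \<Rightarrow> ('n \<Rightarrow> int) \<Rightarrow> 'a::field" where
  "mono_eval m z = (\<Prod>i\<in>UNIV. (of_int (z i)) ^ Poly_Mapping.lookup m i)"

definition peval :: "('n::finite, 'a::field) mpoly \<Rightarrow> ('n \<Rightarrow> int) \<Rightarrow> 'a" where
  "peval p z = (\<Sum>m\<in>Poly_Mapping.keys p. Poly_Mapping.lookup p m * mono_eval m z)"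

definition pVar :: "'n \<Rightarrow> ('n, 'a::field) mpoly" where
  "pVar i = Poly_Mapping.single (Poly_Mapping.single i 1) 1"

definition pConst :: "'a::field \<Rightarrow> ('n, 'a) mpoly" where
  "pConst c = Poly_Mapping.single 0 c"

definition pshift :: "('n::finite, 'a::field) mpoly \<Rightarrow> ('n \<Rightarrow> int) \<Rightarrow> ('n, 'a) mpoly" where
  "pshift p v = (\<Sum>m\<in>Poly_Mapping.keys p. pConst (Poly_Mapping.lookup p m) *
       (\<Prod>i\<in>UNIV. (pVar i + pConst (of_int (v i))) ^ Poly_Mapping.lookup m i))"

definition unitvec :: "'n \<Rightarrow> 'n \<Rightarrow> int" where
  "unitvec i = (\<lambda>j. if j = i then 1 else 0)"

definition vadd :: "('n \<Rightarrow> int) \<Rightarrow> ('n \<Rightarrow> int) \<Rightarrow> 'n \<Rightarrow> int" where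
  "vadd z v = (\<lambda>j. z j + v j)"

definition hypergeometric_term :: "(('n::finite \<Rightarrow> int) \<Rightarrow> 'a::field) \<Rightarrow> bool" where
  "hypergeometric_term f \<longleftrightarrow>
     (\<forall>i. \<exists>A B :: ('n, 'a) mpoly. A \<noteq> 0 \<and> B \<noteq> 0 \<and>
        (\<forall>z. peval A z * f z = peval B z * f (vadd z (unitvec i))))"

definition zero_divisor :: "(('n::finite \<Rightarrow> int) \<Rightarrow> 'a::field) \<Rightarrow> bool" where
  "zero_divisor f \<longleftrightarrow> (\<exists>p :: ('n, 'a) mpoly. p \<noteq> 0 \<and> (\<forall>z. peval p z * f z = 0))"

end

theory Submission
  imports Defs
begin

text \<open>If \<open>p \<noteq> 0\<close> annihilates \<open>f\<close>, take \<open>A v = p\<close> and \<open>B v = p(z + v)\<close>: both sides of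
  \<open>A v \<cdot> f = B v \<cdot> f(z + v)\<close> vanish identically. Shifting \<open>p\<close> by \<open>v\<close> and then by \<open>w\<close> is
  shifting by \<open>v + w\<close>, so the compatibility condition becomes symmetric in \<open>v\<close> and \<open>w\<close>.\<close>

definition monomial_value :: "('n::finite \<Rightarrow> 'b::comm_ring_1) \<Rightarrow> ('n \<Rightarrow>\<^sub>0 nat) \<Rightarrow> 'b" where
  "monomial_value g m = (\<Prod>i\<in>UNIV. g i ^ Poly_Mapping.lookup m i)"

text \<open>Substituting \<open>g i\<close> for \<open>z\<^sub>i\<close> after mapping the coefficients by \<open>h\<close>;
  \<open>peval\<close> and \<open>pshift\<close> are both instances.\<close>

definition mpoly_eval ::
    "('a::comm_ring_1 \<Rightarrow> 'b::comm_ring_1) \<Rightarrow> ('n::finite \<Rightarrow> 'b) \<Rightarrow> ('n, 'a) mpoly \<Rightarrow> 'b" where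
  "mpoly_eval h g p = (\<Sum>m\<in>Poly_Mapping.keys p. h (Poly_Mapping.lookup p m) * monomial_value g m)"

lemma poly_mapping_sum_single_lookup:
  "p = (\<Sum>m\<in>Poly_Mapping.keys p. Poly_Mapping.single m (Poly_Mapping.lookup p m))"
proof -
  have lookup_sum_single: "finite I \<Longrightarrow>
      Poly_Mapping.lookup (\<Sum>m\<in>I. Poly_Mapping.single m (Poly_Mapping.lookup p m)) j =
        (if j \<in> I then Poly_Mapping.lookup p j else 0)" for I j
    by (induction I rule: finite_induct) (auto simp: lookup_single lookup_add when_def)
  show ?thesis
    by (rule poly_mapping_eqI) (simp add: lookup_sum_single in_keys_iff)
qed

lemma monomial_value_add: "monomial_value g (a + b) = monomial_value g a * monomial_value g b"
  by (simp add: monomial_value_def lookup_add power_add prod.distrib)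

lemma monomial_value_0: "monomial_value g 0 = 1"
  by (simp add: monomial_value_def)

lemma monomial_value_single_1: "monomial_value g (Poly_Mapping.single i 1) = g i"
  unfolding monomial_value_def
  by (subst prod.remove[of UNIV i]) (auto simp: lookup_single when_def intro!: prod.neutral)

locale coeff_hom =
  fixes h :: "'a::field \<Rightarrow> 'b::comm_ring_1"
  assumes hom_0: "h 0 = 0" and hom_1: "h 1 = 1"
    and hom_add: "h (x + y) = h x + h y" and hom_mult: "h (x * y) = h x * h y"
begin

lemma mpoly_eval_keys_superset:
  assumes "finite S" "Poly_Mapping.keys p \<subseteq> S"
  shows "mpoly_eval h g p = (\<Sum>m\<in>S. h (Poly_Mapping.lookup p m) * monomial_value g m)"
  unfolding mpoly_eval_def
  by (rule sum.mono_neutral_left) (use assms in \<open>auto simp: hom_0 in_keys_iff\<close>)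

lemma mpoly_eval_0: "mpoly_eval h g 0 = 0"
  by (simp add: mpoly_eval_def)

lemma mpoly_eval_add: "mpoly_eval h g (p + q) = mpoly_eval h g p + mpoly_eval h g q"
proof -
  let ?S = "Poly_Mapping.keys p \<union> Poly_Mapping.keys q \<union> Poly_Mapping.keys (p + q)"
  have "finite ?S" "Poly_Mapping.keys p \<subseteq> ?S" "Poly_Mapping.keys q \<subseteq> ?S"
    "Poly_Mapping.keys (p + q) \<subseteq> ?S"
    by auto
  then show ?thesis
    using mpoly_eval_keys_superset[of ?S p g] mpoly_eval_keys_superset[of ?S q g]
      mpoly_eval_keys_superset[of ?S "p + q" g]
    by (simp add: lookup_add hom_add distrib_right sum.distrib)
qed

lemma mpoly_eval_sum: "mpoly_eval h g (\<Sum>x\<in>A. F x) = (\<Sum>x\<in>A. mpoly_eval h g (F x))"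
  by (induction A rule: infinite_finite_induct) (auto simp: mpoly_eval_0 mpoly_eval_add)

lemma mpoly_eval_single: "mpoly_eval h g (Poly_Mapping.single m c) = h c * monomial_value g m"
  using mpoly_eval_keys_superset[of "{m}" "Poly_Mapping.single m c" g] by simp

lemma mpoly_eval_mult: "mpoly_eval h g (p * q) = mpoly_eval h g p * mpoly_eval h g q"
proof -
  have "p * q = (\<Sum>a\<in>Poly_Mapping.keys p. \<Sum>b\<in>Poly_Mapping.keys q.
        Poly_Mapping.single (a + b) (Poly_Mapping.lookup p a * Poly_Mapping.lookup q b))"
    by (subst (1 2) poly_mapping_sum_single_lookup) (simp add: sum_product mult_single)
  then have "mpoly_eval h g (p * q) = (\<Sum>a\<in>Poly_Mapping.keys p. \<Sum>b\<in>Poly_Mapping.keys q.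
        h (Poly_Mapping.lookup p a) * monomial_value g a *
        (h (Poly_Mapping.lookup q b) * monomial_value g b))"
    by (simp add: mpoly_eval_sum mpoly_eval_single hom_mult monomial_value_add ac_simps)
  also have "\<dots> = mpoly_eval h g p * mpoly_eval h g q"
    by (simp add: mpoly_eval_def sum_product)
  finally show ?thesis .
qed

lemma mpoly_eval_1: "mpoly_eval h g 1 = 1"
  using mpoly_eval_single[of g 0 1] by (simp add: hom_1 monomial_value_0)

lemma mpoly_eval_power: "mpoly_eval h g (p ^ n) = mpoly_eval h g p ^ n"
  by (induction n) (simp_all add: mpoly_eval_1 mpoly_eval_mult)

lemma mpoly_eval_prod: "mpoly_eval h g (\<Prod>x\<in>A. F x) = (\<Prod>x\<in>A. mpoly_eval h g (F x))"
  by (induction A rule: infinite_finite_induct) (auto simp: mpoly_eval_1 mpoly_eval_mult)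

lemma mpoly_eval_pConst: "mpoly_eval h g (pConst c) = h c"
  by (simp add: pConst_def mpoly_eval_single monomial_value_0)

lemma mpoly_eval_pVar: "mpoly_eval h g (pVar i) = g i"
  unfolding pVar_def mpoly_eval_single monomial_value_single_1 hom_1 by simp

lemma mpoly_eval_substitute:
  "mpoly_eval h g (mpoly_eval pConst s p) = mpoly_eval h (\<lambda>i. mpoly_eval h g (s i)) p"
  unfolding mpoly_eval_def[of pConst] monomial_value_def
  by (simp add: mpoly_eval_sum mpoly_eval_mult mpoly_eval_prod mpoly_eval_power mpoly_eval_pConst
      mpoly_eval_def[of h "\<lambda>i. mpoly_eval h g (s i)"] monomial_value_def)

end

interpretation id_coeff_hom: coeff_hom "\<lambda>x::'a::field. x"
  by unfold_locales simp_all

interpretation pConst_coeff_hom: coeff_hom "pConst :: 'a::field \<Rightarrow> ('n, 'a) mpoly"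
  by unfold_locales (simp_all add: pConst_def single_add mult_single)

lemma peval_eq_mpoly_eval: "peval p z = mpoly_eval (\<lambda>x. x) (\<lambda>i. of_int (z i)) p"
  by (simp add: peval_def mpoly_eval_def mono_eval_def monomial_value_def)

lemma pshift_eq_mpoly_eval: "pshift p v = mpoly_eval pConst (\<lambda>i. pVar i + pConst (of_int (v i))) p"
  by (simp add: pshift_def mpoly_eval_def monomial_value_def)

lemma peval_pshift: "peval (pshift p v) z = peval p (vadd z v)"
  unfolding peval_eq_mpoly_eval pshift_eq_mpoly_eval id_coeff_hom.mpoly_eval_substitute
  by (simp add: id_coeff_hom.mpoly_eval_add id_coeff_hom.mpoly_eval_pVar
      id_coeff_hom.mpoly_eval_pConst vadd_def)

lemma pshift_pshift: "pshift (pshift p v) w = pshift p (vadd v w)"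
  unfolding pshift_eq_mpoly_eval pConst_coeff_hom.mpoly_eval_substitute
  by (simp add: pConst_coeff_hom.mpoly_eval_add pConst_coeff_hom.mpoly_eval_pVar
      pConst_coeff_hom.mpoly_eval_pConst pConst_coeff_hom.hom_add vadd_def add_ac)

lemma mpoly_eval_pConst_pVar: "mpoly_eval pConst pVar p = p"
  for p :: "('n::finite, 'a::field) mpoly"
proof -
  have pVar_power: "(pVar i :: ('n, 'a) mpoly) ^ n = Poly_Mapping.single (Poly_Mapping.single i n) 1"
    for i n
    by (induction n) (simp_all add: pVar_def mult_single single_add[symmetric] add.commute)
  have prod_single: "(\<Prod>i\<in>A. Poly_Mapping.single (F i) (1::'a)) = Poly_Mapping.single (sum F A) 1"
    for A and F :: "'n \<Rightarrow> 'n \<Rightarrow>\<^sub>0 nat"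
    by (induction A rule: infinite_finite_induct) (simp_all add: mult_single)
  have sum_single: "(\<Sum>i\<in>UNIV. Poly_Mapping.single i (Poly_Mapping.lookup m i)) = m"
    for m :: "'n \<Rightarrow>\<^sub>0 nat"
    by (rule poly_mapping_eqI) (simp add: lookup_sum lookup_single when_def)
  have "monomial_value pVar m = Poly_Mapping.single m (1::'a)" for m :: "'n \<Rightarrow>\<^sub>0 nat"
    unfolding monomial_value_def pVar_power prod_single sum_single ..
  then show ?thesis
    by (subst (2) poly_mapping_sum_single_lookup)
      (simp add: mpoly_eval_def pConst_def mult_single)
qed

lemma pshift_zero_vector: "pshift p (\<lambda>i. 0) = p"
  using mpoly_eval_pConst_pVar[of p] by (simp add: pshift_eq_mpoly_eval pConst_def)

lemma pshift_eq_0_iff: "pshift p v = 0 \<longleftrightarrow> p = 0"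
proof
  assume "pshift p v = 0"
  then have "pshift (pshift p v) (\<lambda>i. - v i) = 0"
    by (simp add: pshift_def)
  then show "p = 0"
    by (simp add: pshift_pshift vadd_def pshift_zero_vector)
qed (simp add: pshift_def)

lemma annihilator_shift_relation:
  assumes "\<And>z. peval p z * f z = 0"
  shows "peval p z * f z = peval (pshift p v) z * f (vadd z v)"
  using assms[of z] assms[of "vadd z v"] by (simp add: peval_pshift del: mult_eq_0_iff)

lemma shift_cocycle:
  "p * pshift p v * pshift p w * pshift (pshift p v) w =
   p * pshift p w * pshift p v * pshift (pshift p w) v"
  by (simp add: pshift_pshift vadd_def add.commute mult_ac)

theorem propositionB8:
  fixes f :: "('n::finite \<Rightarrow> int) \<Rightarrow> 'a::field"
  assumes "hypergeometric_term f" and "zero_divisor f"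
  shows "\<exists>A B :: ('n \<Rightarrow> int) \<Rightarrow> ('n, 'a) mpoly.
           (\<forall>v. A v \<noteq> 0 \<and> B v \<noteq> 0 \<and>
                (\<forall>z. peval (A v) z * f z = peval (B v) z * f (vadd z v))) \<and>
           (\<forall>v w. A v * pshift (A w) v * B w * pshift (B v) w =
                  A w * pshift (A v) w * B v * pshift (B w) v)"
proof -
  obtain p :: "('n, 'a) mpoly" where "p \<noteq> 0" and annihilates: "\<And>z. peval p z * f z = 0"
    using assms(2) unfolding zero_divisor_def by blast
  have shift_relation: "\<forall>v. p \<noteq> 0 \<and> pshift p v \<noteq> 0 \<and>
      (\<forall>z. peval p z * f z = peval (pshift p v) z * f (vadd z v))"
    using \<open>p \<noteq> 0\<close> annihilator_shift_relation[OF annihilates] pshift_eq_0_iff by blast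
  show ?thesis
    by (rule exI[of _ "\<lambda>v. p"], rule exI[of _ "pshift p"])
      (use shift_relation shift_cocycle[of p] in blast)
qed

end
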